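(* Let $\Omega\subset\mathbb{C}$ be a non-empty open set with connected components $\{A_i\}_{i\in I}$. Let $(X,\|\cdot\|)$ be a non-trivial Banach space of holomorphic functions on $\Omega$ such that: the constant function $1$ belongs to $X$; every point-evaluation functional is bounded (for each $z\in\Omega$ there is $C(z)>0$ with $|f(z)|\le C(z)\|f\|$ for all $f\in X$); and for every $g\in X$, each function $g\chi_{A_i}$ (equal to $g$ on $A_i$ and $0$ on $\Omega\setminus A_i$) belongs to $X$ and $\sum_{i\in I}\|g\chi_{A_i}\|<\infty$. Let $\phi$ be holomorphic on $\Omega$ such that $M_\phi f=\phi f$ defines a bounded operator $M_\phi:X\to X$. Then the following are equivalent: (1) $M_\phi$ is recurrent; (2) $M_\phi$ is rigid; (3) $\phi$ is constant on each $A_i$ and $|\phi(z)|=1$ for all $z\in\Omega$; (4) $M_\phi$ is hyper-recurrent; (5) $\mathrm{Hr}(M_\phi)$ is dense in $X$.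
   Context: For a bounded operator $T$ on a Banach space $X$: $x$ is recurrent if $T^{\omega_n}x\to x$ for some strictly increasing sequence $(\omega_n)$ of positive integers; $\mathrm{Rec}(T)$ is the set of recurrent vectors and $T$ is recurrent if $\mathrm{Rec}(T)$ is dense. $\mathfrak{C}$ is the set of strictly increasing sequences $\omega$ with $T^{\omega_n}x\to x$ for some $x\ne0$; $\mathfrak{L}(\omega)=\{x:T^{\omega_n}x\to x\}$. $T$ is rigid if $\mathfrak{L}(\omega)=X$ for some $\omega\in\mathfrak{C}$. $\mathrm{Hr}(T)$ is the set of $x\in\mathrm{Rec}(T)$ such that $\mathfrak{L}(\omega)$ is dense for every $\omega\in\mathfrak{C}$ with $x\in\mathfrak{L}(\omega)$; a recurrent $T$ is hyper-recurrent if $\mathrm{Hr}(T)\ne\emptyset$. *)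

theory Defs
  imports "HOL-Analysis.Analysis"
begin

text \<open>A Banach space of holomorphic functions on an open set Omega is modelled concretely as a
set X of functions complex to complex (each vanishing outside Omega, the canonical representative)
together with a norm N on X.\<close>

definition holo_banach_space ::
  "complex set \<Rightarrow> (complex \<Rightarrow> complex) set \<Rightarrow> ((complex \<Rightarrow> complex) \<Rightarrow> real) \<Rightarrow> bool" where
  "holo_banach_space \<Omega> X N \<longleftrightarrow>
     (\<forall>f\<in>X. f holomorphic_on \<Omega> \<and> (\<forall>z. z \<notin> \<Omega> \<longrightarrow> f z = 0)) \<and>
     (\<lambda>z. 0) \<in> X \<and>
     (\<forall>f\<in>X. \<forall>g\<in>X. (\<lambda>z. f z + g z) \<in> X) \<and>
     (\<forall>c. \<forall>f\<in>X. (\<lambda>z. c * f z) \<in> X) \<and>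
     (\<forall>f\<in>X. N f \<ge> 0 \<and> (N f = 0 \<longleftrightarrow> f = (\<lambda>z. 0))) \<and>
     (\<forall>f\<in>X. \<forall>g\<in>X. N (\<lambda>z. f z + g z) \<le> N f + N g) \<and>
     (\<forall>c. \<forall>f\<in>X. N (\<lambda>z. c * f z) = norm c * N f) \<and>
     (\<forall>s. (\<forall>n. s n \<in> X) \<longrightarrow>
        (\<forall>e>0. \<exists>M. \<forall>m\<ge>M. \<forall>n\<ge>M. N (\<lambda>z. s m z - s n z) < e) \<longrightarrow>
        (\<exists>f\<in>X. (\<lambda>n. N (\<lambda>z. s n z - f z)) \<longlonglongrightarrow> 0))"

definition nconv :: "((complex \<Rightarrow> complex) \<Rightarrow> real) \<Rightarrow> (nat \<Rightarrow> complex \<Rightarrow> complex) \<Rightarrow> (complex \<Rightarrow> complex) \<Rightarrow> bool" where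
  "nconv N s x \<longleftrightarrow> (\<lambda>n. N (\<lambda>z. s n z - x z)) \<longlonglongrightarrow> 0"

definition ndense :: "(complex \<Rightarrow> complex) set \<Rightarrow> ((complex \<Rightarrow> complex) \<Rightarrow> real) \<Rightarrow> (complex \<Rightarrow> complex) set \<Rightarrow> bool" where
  "ndense X N A \<longleftrightarrow> A \<subseteq> X \<and> (\<forall>x\<in>X. \<forall>e>0. \<exists>y\<in>A. N (\<lambda>z. x z - y z) < e)"

definition incseq_pos :: "(nat \<Rightarrow> nat) \<Rightarrow> bool" where
  "incseq_pos \<omega> \<longleftrightarrow> strict_mono \<omega> \<and> (\<forall>n. 0 < \<omega> n)"

type_synonym fn = "complex \<Rightarrow> complex"

definition Rec_set :: "fn set \<Rightarrow> (fn \<Rightarrow> real) \<Rightarrow> (fn \<Rightarrow> fn) \<Rightarrow> fn set" where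
  "Rec_set X N T = {x\<in>X. \<exists>\<omega>. incseq_pos \<omega> \<and> nconv N (\<lambda>n. (T ^^ \<omega> n) x) x}"

definition recurrent_op :: "fn set \<Rightarrow> (fn \<Rightarrow> real) \<Rightarrow> (fn \<Rightarrow> fn) \<Rightarrow> bool" where
  "recurrent_op X N T \<longleftrightarrow> ndense X N (Rec_set X N T)"

definition Lset :: "fn set \<Rightarrow> (fn \<Rightarrow> real) \<Rightarrow> (fn \<Rightarrow> fn) \<Rightarrow> (nat \<Rightarrow> nat) \<Rightarrow> fn set" where
  "Lset X N T \<omega> = {x\<in>X. nconv N (\<lambda>n. (T ^^ \<omega> n) x) x}"

definition Cset :: "fn set \<Rightarrow> (fn \<Rightarrow> real) \<Rightarrow> (fn \<Rightarrow> fn) \<Rightarrow> (nat \<Rightarrow> nat) set" where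
  "Cset X N T = {\<omega>. incseq_pos \<omega> \<and> (\<exists>x\<in>Lset X N T \<omega>. x \<noteq> (\<lambda>z. 0))}"

definition rigid_op :: "fn set \<Rightarrow> (fn \<Rightarrow> real) \<Rightarrow> (fn \<Rightarrow> fn) \<Rightarrow> bool" where
  "rigid_op X N T \<longleftrightarrow> (\<exists>\<omega>\<in>Cset X N T. Lset X N T \<omega> = X)"

definition Hr_set :: "fn set \<Rightarrow> (fn \<Rightarrow> real) \<Rightarrow> (fn \<Rightarrow> fn) \<Rightarrow> fn set" where
  "Hr_set X N T = {x\<in>Rec_set X N T. \<forall>\<omega>\<in>Cset X N T. x \<in> Lset X N T \<omega> \<longrightarrow> ndense X N (Lset X N T \<omega>)}"

definition hyper_recurrent_op :: "fn set \<Rightarrow> (fn \<Rightarrow> real) \<Rightarrow> (fn \<Rightarrow> fn) \<Rightarrow> bool" where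
  "hyper_recurrent_op X N T \<longleftrightarrow> recurrent_op X N T \<and> Hr_set X N T \<noteq> {}"

definition mult_op :: "fn \<Rightarrow> fn \<Rightarrow> fn" where
  "mult_op \<phi> f = (\<lambda>z. \<phi> z * f z)"

end

theory Submission
  imports Defs "HOL-Complex_Analysis.Conformal_Mappings"
begin

text \<open>
  If \<open>M\<^sub>\<phi>\<close> is recurrent, then near the constant \<open>1\<close> there is a recurrent \<open>y\<close> with \<open>y z \<noteq> 0\<close> at a
  prescribed point \<open>z\<close>; point evaluation turns \<open>M\<^sub>\<phi>\<^sup>\<omega>\<^sup>n y \<rightarrow> y\<close> into \<open>\<phi> z ^ \<omega> n \<rightarrow> 1\<close>, which forces
  \<open>|\<phi> z| = 1\<close>, and by the maximum modulus principle \<open>\<phi>\<close> is constant on every component.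

  Conversely, let \<open>\<phi> = c\<^sub>A\<close> on each component \<open>A\<close> with \<open>|c\<^sub>A| = 1\<close>. There are only countably many
  components, since \<open>\<Sum>\<^sub>A \<parallel>\<chi>\<^sub>A\<parallel> < \<infinity>\<close> with positive terms. Simultaneous recurrence of rotations on
  finitely many components, combined with a diagonal argument, gives one sequence \<open>\<omega>\<close> with
  \<open>c\<^sub>A ^ \<omega> n \<rightarrow> 1\<close> for all \<open>A\<close>; then \<open>\<parallel>M\<^sub>\<phi>\<^sup>\<omega>\<^sup>n g - g\<parallel> \<le> \<Sum>\<^sub>A |c\<^sub>A ^ \<omega> n - 1| \<parallel>g \<chi>\<^sub>A\<parallel> \<rightarrow> 0\<close> by
  dominated convergence, so \<open>M\<^sub>\<phi>\<close> is rigid. If \<open>x\<close> vanishes identically on no component, then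
  \<open>x \<in> \<L>(\<omega>)\<close> already forces \<open>c\<^sub>A ^ \<omega> n \<rightarrow> 1\<close> for every \<open>A\<close>, hence \<open>\<L>(\<omega>) = X\<close>; such \<open>x\<close> lie in
  \<open>Hr(M\<^sub>\<phi>)\<close>, and they are dense: adding \<open>t \<cdot> 1\<close> to any \<open>y\<close> works for all small \<open>t\<close> outside a
  countable set.
\<close>

lemma incseq_pos_choice:
  assumes "\<And>n K. \<exists>k>K. P n k"
  obtains \<omega> where "incseq_pos \<omega>" "\<And>n. P n (\<omega> n)"
proof -
  have "\<exists>\<omega>. \<forall>n. (0 < \<omega> n \<and> P n (\<omega> n)) \<and> \<omega> n < \<omega> (Suc n)"
  proof (rule dependent_nat_choice)
    show "\<exists>k. 0 < k \<and> P 0 k" using assms[of 0 0] by blast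
    show "\<exists>l. (0 < l \<and> P (Suc n) l) \<and> k < l" for k n
    proof -
      obtain l where "l > k" "P (Suc n) l" using assms by blast
      then show ?thesis by (intro exI[of _ l]) auto
    qed
  qed
  then show ?thesis using that unfolding incseq_pos_def strict_mono_Suc_iff by blast
qed

lemma countable_finite_exhaustion:
  assumes "countable C"
  obtains G where "\<And>n. finite (G n)" "\<And>n. G n \<subseteq> C" "incseq G"
    "\<And>A. A \<in> C \<Longrightarrow> eventually (\<lambda>n. A \<in> G n) sequentially"
proof
  define G where "G n = {A\<in>C. to_nat_on C A < n}" for n
  show "finite (G n)" for n
    using inj_on_to_nat_on[OF assms] by (intro inj_on_finite[of "to_nat_on C" _ "{..<n}"])
      (auto simp: G_def inj_on_subset)
  show "G n \<subseteq> C" for n by (auto simp: G_def)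
  show "incseq G" by (auto simp: incseq_def G_def)
  show "eventually (\<lambda>n. A \<in> G n) sequentially" if "A \<in> C" for A
    using that by (auto simp: G_def eventually_sequentially intro: exI[of _ "Suc (to_nat_on C A)"])
qed

lemma has_sum_finite_exhaustion_tendsto:
  fixes w :: "'a \<Rightarrow> 'b::{comm_monoid_add, topological_space}"
  assumes "(w has_sum S) C" and "\<And>n. finite (G n)" and "\<And>n. G n \<subseteq> C"
    and "\<And>A. A \<in> C \<Longrightarrow> eventually (\<lambda>n. A \<in> G n) sequentially"
  shows "(\<lambda>n. sum w (G n)) \<longlonglongrightarrow> S"
proof -
  have "filterlim G (finite_subsets_at_top C) sequentially"
    unfolding filterlim_def le_filter_def eventually_filtermap eventually_finite_subsets_at_top
  proof safe
    fix P F assume F: "finite F" "F \<subseteq> C" and P: "\<forall>Y. finite Y \<and> F \<subseteq> Y \<and> Y \<subseteq> C \<longrightarrow> P Y"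
    have "eventually (\<lambda>n. \<forall>A\<in>F. A \<in> G n) sequentially"
      using F assms(4) by (intro eventually_ball_finite) auto
    then show "eventually (\<lambda>n. P (G n)) sequentially"
      by eventually_elim (use P assms(2,3) in blast)
  qed
  with assms(1) show ?thesis
    unfolding has_sum_def by (rule filterlim_compose)
qed

lemma infsum_tendsto_0_dominated:
  fixes a :: "nat \<Rightarrow> 'i \<Rightarrow> real"
  assumes b: "b summable_on I" and bound: "\<And>n i. i \<in> I \<Longrightarrow> 0 \<le> a n i \<and> a n i \<le> b i"
    and lim: "\<And>i. i \<in> I \<Longrightarrow> (\<lambda>n. a n i) \<longlonglongrightarrow> 0"
  shows "(\<lambda>n. infsum (a n) I) \<longlonglongrightarrow> 0"
proof (rule LIMSEQ_I)
  fix e :: real assume e: "e > 0"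
  obtain F where F: "finite F" "F \<subseteq> I" "dist (sum b F) (infsum b I) \<le> e/2"
    using infsum_finite_approximation[OF b, of "e/2"] e by auto
  have b_tail: "b summable_on (I - F)" using summable_on_subset[OF b] by auto
  have "infsum b I = infsum b F + infsum b (I - F)"
    using infsum_Un_disjoint[of b F "I - F"] F(1,2) b_tail by (simp add: Un_absorb1)
  then have tail: "infsum b (I - F) \<le> e/2" using F by (simp add: dist_real_def)
  have "(\<lambda>n. \<Sum>i\<in>F. a n i) \<longlonglongrightarrow> 0" using lim F(2) by (intro tendsto_null_sum) auto
  then obtain M where M: "\<And>n. n \<ge> M \<Longrightarrow> norm (\<Sum>i\<in>F. a n i) < e/2"
    using LIMSEQ_D[of _ 0 "e/2"] e by fastforce
  show "\<exists>no. \<forall>n\<ge>no. norm (infsum (a n) I - 0) < e"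
  proof (intro exI allI impI)
    fix n assume n: "n \<ge> M"
    have a_tail: "a n summable_on (I - F)"
      by (rule summable_on_comparison_test[OF b_tail]) (use bound in auto)
    have split: "infsum (a n) I = (\<Sum>i\<in>F. a n i) + infsum (a n) (I - F)"
      using infsum_Un_disjoint[of "a n" F "I - F"] F(1,2) a_tail by (simp add: Un_absorb1)
    have "infsum (a n) (I - F) \<le> infsum b (I - F)"
      by (rule infsum_mono[OF a_tail b_tail]) (use bound in auto)
    moreover have "infsum (a n) (I - F) \<ge> 0" by (rule infsum_nonneg) (use bound in auto)
    moreover have "(\<Sum>i\<in>F. a n i) \<ge> 0" using bound F(2) by (intro sum_nonneg) auto
    ultimately show "norm (infsum (a n) I - 0) < e" using split tail M[OF n] by auto
  qed
qed

lemma finite_bounded_powers_convergent_subseq: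
  fixes c :: "'i \<Rightarrow> 'a::{real_normed_field, heine_borel}"
  assumes "finite F" "\<And>A. A \<in> F \<Longrightarrow> norm (c A) \<le> 1"
  shows "\<exists>r. strict_mono r \<and> (\<forall>A\<in>F. convergent (\<lambda>j. c A ^ r j))"
  using assms
proof (induction F rule: finite_induct)
  case empty
  show ?case using strict_mono_id by blast
next
  case (insert A F)
  then obtain r where r: "strict_mono r" "\<forall>B\<in>F. convergent (\<lambda>j. c B ^ r j)" by auto
  have "norm (c A ^ r j) \<le> 1" for j using insert.prems[of A] by (simp add: norm_power power_le_one)
  then have "bounded (range (\<lambda>j. c A ^ r j))" unfolding bounded_iff by blast
  then obtain l r' where r': "strict_mono r'" "((\<lambda>j. c A ^ r j) \<circ> r') \<longlonglongrightarrow> l"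
    using bounded_imp_convergent_subsequence by blast
  have "convergent (\<lambda>j. c B ^ (r \<circ> r') j)" if B: "B \<in> insert A F" for B
  proof (cases "B = A")
    case True
    then show ?thesis using r'(2) by (auto simp: o_def intro: convergentI)
  next
    case False
    then obtain L where "(\<lambda>j. c B ^ r j) \<longlonglongrightarrow> L"
      using r(2) B unfolding convergent_def by auto
    from LIMSEQ_subseq_LIMSEQ[OF this r'(1)] show ?thesis by (auto simp: o_def intro: convergentI)
  qed
  then show ?case using strict_mono_o[OF r(1) r'(1)] by blast
qed

text \<open>Two far-apart members of a convergent subsequence of the powers are close, and their
  quotient is again a power, of arbitrarily large exponent.\<close>

lemma finite_unimodular_powers_near_1:
  fixes c :: "'i \<Rightarrow> 'a::{real_normed_field, heine_borel}"
  assumes F: "finite F" and c1: "\<And>A. A \<in> F \<Longrightarrow> norm (c A) = 1" and e: "e > 0"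
  shows "\<exists>k>K. \<forall>A\<in>F. norm (c A ^ k - 1) < e"
proof -
  obtain r where r: "strict_mono r" "\<forall>A\<in>F. convergent (\<lambda>j. c A ^ r j)"
    using finite_bounded_powers_convergent_subseq[OF F, of c] c1 by fastforce
  then obtain L where L: "\<And>A. A \<in> F \<Longrightarrow> (\<lambda>j. c A ^ r j) \<longlonglongrightarrow> L A"
    unfolding convergent_def by metis
  have "eventually (\<lambda>j. \<forall>A\<in>F. dist (c A ^ r j) (L A) < e/2) sequentially"
    using L e by (intro eventually_ball_finite[OF F] ballI tendstoD) auto
  then obtain J where J: "\<And>j A. j \<ge> J \<Longrightarrow> A \<in> F \<Longrightarrow> dist (c A ^ r j) (L A) < e/2"
    unfolding eventually_sequentially by blast
  define j where "j = r J + K + 1"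
  define k where "k = r j - r J"
  have "J \<le> r J" "j \<le> r j" using seq_suble[OF r(1)] by auto
  then have jJ: "J \<le> j" and "K < k" and rj: "r j = k + r J" unfolding k_def j_def by linarith+
  have "norm (c A ^ k - 1) < e" if A: "A \<in> F" for A
  proof -
    have "norm (c A ^ k - 1) = norm ((c A ^ k - 1) * c A ^ r J)"
      using c1[OF A] by (simp add: norm_mult norm_power)
    also have "\<dots> = dist (c A ^ r j) (c A ^ r J)"
      by (simp add: rj power_add dist_norm algebra_simps)
    also have "\<dots> \<le> dist (c A ^ r j) (L A) + dist (c A ^ r J) (L A)" by (rule dist_triangle2)
    also have "\<dots> < e" using J[OF jJ A] J[OF order_refl A] by linarith
    finally show ?thesis .
  qed
  with \<open>K < k\<close> show ?thesis by blast
qed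

lemma countable_unimodular_powers_tendsto_1:
  fixes c :: "'i \<Rightarrow> 'a::{real_normed_field, heine_borel}"
  assumes "countable C" and c1: "\<And>A. A \<in> C \<Longrightarrow> norm (c A) = 1"
  obtains \<omega> where "incseq_pos \<omega>" "\<And>A. A \<in> C \<Longrightarrow> (\<lambda>n. c A ^ \<omega> n) \<longlonglongrightarrow> 1"
proof -
  obtain G where G: "\<And>n. finite (G n)" "\<And>n. G n \<subseteq> C"
    and exhaust: "\<And>A. A \<in> C \<Longrightarrow> eventually (\<lambda>n. A \<in> G n) sequentially"
    using countable_finite_exhaustion[OF assms(1)] by metis
  have "\<exists>k>K. \<forall>A\<in>G n. norm (c A ^ k - 1) < inverse (Suc n)" for n K
    using G c1 by (intro finite_unimodular_powers_near_1) auto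
  then obtain \<omega> where \<omega>: "incseq_pos \<omega>"
    "\<And>n. \<forall>A\<in>G n. norm (c A ^ \<omega> n - 1) < inverse (Suc n)"
    using incseq_pos_choice[of "\<lambda>n k. \<forall>A\<in>G n. norm (c A ^ k - 1) < inverse (Suc n)"] by blast
  have "(\<lambda>n. c A ^ \<omega> n) \<longlonglongrightarrow> 1" if A: "A \<in> C" for A
  proof -
    have "eventually (\<lambda>n. norm (c A ^ \<omega> n - 1) \<le> inverse (Suc n)) sequentially"
      using exhaust[OF A] by eventually_elim (use \<omega>(2) in \<open>auto intro: less_imp_le\<close>)
    then have "(\<lambda>n. c A ^ \<omega> n - 1) \<longlonglongrightarrow> 0"
      by (rule Lim_null_comparison) (rule LIMSEQ_inverse_real_of_nat)
    then show ?thesis by (simp add: LIM_zero_iff)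
  qed
  with \<omega>(1) that show ?thesis by blast
qed

lemma power_seq_tendsto_1_imp_eq_1:
  fixes r :: real
  assumes r: "r \<ge> 0" and lim: "(\<lambda>n. r ^ \<omega> n) \<longlonglongrightarrow> 1" and pos: "\<And>n. \<omega> n \<ge> 1"
  shows "r = 1"
proof (rule ccontr)
  assume "r \<noteq> 1"
  then consider "r < 1" | "r > 1" by linarith
  then show False
  proof cases
    case 1
    then have "r ^ \<omega> n \<le> r" for n using power_decreasing[OF pos[of n] r] by simp
    then show False using LIMSEQ_le_const2[OF lim] 1 by force
  next
    case 2
    then have "r \<le> r ^ \<omega> n" for n using power_increasing[OF pos[of n], of r] by simp
    then show False using LIMSEQ_le_const[OF lim] 2 by force
  qed
qed

lemma funpow_mult_op: "(mult_op \<phi> ^^ k) f = (\<lambda>z. \<phi> z ^ k * f z)"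
  by (induction k) (auto simp: mult_op_def)

abbreviation chi :: "complex set \<Rightarrow> fn \<Rightarrow> fn" where
  "chi A g \<equiv> (\<lambda>z. if z \<in> A then g z else 0)"

locale holo_banach =
  fixes \<Omega> :: "complex set" and X :: "fn set" and N :: "fn \<Rightarrow> real"
  assumes banach: "holo_banach_space \<Omega> X N" and open_\<Omega>: "open \<Omega>"
    and point_eval: "\<forall>z\<in>\<Omega>. \<exists>C>0. \<forall>f\<in>X. norm (f z) \<le> C * N f"
    and component_decomposition: "\<forall>g\<in>X. (\<forall>A\<in>components \<Omega>. chi A g \<in> X) \<and>
                (\<lambda>A. N (chi A g)) summable_on components \<Omega>"
    and one_in_X: "chi \<Omega> (\<lambda>z. 1) \<in> X"
begin

lemma X_vanishes_outside: "f \<in> X \<Longrightarrow> z \<notin> \<Omega> \<Longrightarrow> f z = 0"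
  and X_zero: "(\<lambda>z. 0) \<in> X"
  and X_add: "f \<in> X \<Longrightarrow> g \<in> X \<Longrightarrow> (\<lambda>z. f z + g z) \<in> X"
  and X_scale: "f \<in> X \<Longrightarrow> (\<lambda>z. c * f z) \<in> X"
  and N_nonneg: "f \<in> X \<Longrightarrow> N f \<ge> 0"
  and N_eq_0_iff: "f \<in> X \<Longrightarrow> N f = 0 \<longleftrightarrow> f = (\<lambda>z. 0)"
  and N_triangle: "f \<in> X \<Longrightarrow> g \<in> X \<Longrightarrow> N (\<lambda>z. f z + g z) \<le> N f + N g"
  and N_scale: "f \<in> X \<Longrightarrow> N (\<lambda>z. c * f z) = norm c * N f"
  and X_complete: "(\<And>n. s n \<in> X) \<Longrightarrow> (\<forall>e>0. \<exists>M. \<forall>m\<ge>M. \<forall>n\<ge>M. N (\<lambda>z. s m z - s n z) < e) \<Longrightarrow>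
        \<exists>f\<in>X. nconv N s f"
  using banach unfolding holo_banach_space_def nconv_def by blast+

lemma N_zero: "N (\<lambda>z. 0) = 0"
  using N_eq_0_iff X_zero by blast

lemma X_diff: "f \<in> X \<Longrightarrow> g \<in> X \<Longrightarrow> (\<lambda>z. f z - g z) \<in> X"
  using X_add[OF _ X_scale, of f g "-1"] by simp

lemma X_sum: "finite F \<Longrightarrow> (\<And>A. A \<in> F \<Longrightarrow> u A \<in> X) \<Longrightarrow> (\<lambda>z. \<Sum>A\<in>F. u A z) \<in> X"
  by (induction F rule: finite_induct) (auto simp: X_zero intro!: X_add)

lemma N_sum:
  "finite F \<Longrightarrow> (\<And>A. A \<in> F \<Longrightarrow> u A \<in> X) \<Longrightarrow> N (\<lambda>z. \<Sum>A\<in>F. u A z) \<le> (\<Sum>A\<in>F. N (u A))"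
proof (induction F rule: finite_induct)
  case (insert a F)
  then show ?case
    using N_triangle[of "u a" "\<lambda>z. \<Sum>A\<in>F. u A z"] X_sum[of F u] by fastforce
qed (simp add: N_zero)

lemma N_diff_commute: "f \<in> X \<Longrightarrow> g \<in> X \<Longrightarrow> N (\<lambda>z. f z - g z) = N (\<lambda>z. g z - f z)"
  using N_scale[OF X_diff, of f g "-1"] by simp

lemma N_le_add_diff: "f \<in> X \<Longrightarrow> g \<in> X \<Longrightarrow> N f \<le> N g + N (\<lambda>z. f z - g z)"
  using N_triangle[OF _ X_diff, of g f g] by simp

lemma ndense_X: "ndense X N X"
  unfolding ndense_def
proof (intro conjI ballI allI impI)
  fix x and e :: real assume "x \<in> X" "0 < e"
  then show "\<exists>y\<in>X. N (\<lambda>z. x z - y z) < e" using N_zero by (intro bexI[of _ x]) auto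
qed simp

lemma nconv_imp_pointwise:
  assumes s: "\<And>n. s n \<in> X" and f: "f \<in> X" and conv: "nconv N s f" and z: "z \<in> \<Omega>"
  shows "(\<lambda>n. s n z) \<longlonglongrightarrow> f z"
proof -
  obtain C where C: "\<forall>f\<in>X. norm (f z) \<le> C * N f" using point_eval z by blast
  have "eventually (\<lambda>n. norm (s n z - f z) \<le> C * N (\<lambda>z. s n z - f z)) sequentially"
    using C X_diff[OF s f] by (intro always_eventually) fastforce
  moreover have "(\<lambda>n. C * N (\<lambda>z. s n z - f z)) \<longlonglongrightarrow> 0"
    using conv unfolding nconv_def by (rule tendsto_mult_right_zero)
  ultimately have "(\<lambda>n. s n z - f z) \<longlonglongrightarrow> 0" by (rule Lim_null_comparison)
  then show ?thesis by (simp add: LIM_zero_iff)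
qed

lemma nconv_limit_eq_pointwise_limit:
  assumes s: "\<And>n. s n \<in> X" and f: "f \<in> X" and conv: "nconv N s f"
    and h: "\<And>z. z \<notin> \<Omega> \<Longrightarrow> h z = 0" and pointwise: "\<And>z. z \<in> \<Omega> \<Longrightarrow> (\<lambda>n. s n z) \<longlonglongrightarrow> h z"
  shows "f = h"
proof
  fix z
  show "f z = h z"
  proof (cases "z \<in> \<Omega>")
    case True
    then show ?thesis using LIMSEQ_unique[OF nconv_imp_pointwise[OF s f conv] pointwise] by blast
  qed (simp add: X_vanishes_outside[OF f] h)
qed

lemma chi_in_X: "g \<in> X \<Longrightarrow> A \<in> components \<Omega> \<Longrightarrow> chi A g \<in> X"
  and summable_component_norms: "g \<in> X \<Longrightarrow> (\<lambda>A. N (chi A g)) summable_on components \<Omega>"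
  using component_decomposition by blast+

lemma N_chi_one_pos: "A \<in> components \<Omega> \<Longrightarrow> N (chi A (chi \<Omega> (\<lambda>z. 1))) > 0"
proof -
  assume A: "A \<in> components \<Omega>"
  then obtain z where "z \<in> A" "z \<in> \<Omega>" using in_components_nonempty in_components_subset by blast
  then have "chi A (chi \<Omega> (\<lambda>z. 1)) \<noteq> (\<lambda>z. 0)" by (auto dest: fun_cong[of _ _ z])
  then show ?thesis
    using N_nonneg[OF chi_in_X[OF one_in_X A]] N_eq_0_iff[OF chi_in_X[OF one_in_X A]]
    by (simp add: less_le)
qed

lemma countable_components: "countable (components \<Omega>)"
proof -
  have "countable {A\<in>components \<Omega>. N (chi A (chi \<Omega> (\<lambda>z. 1))) \<noteq> 0}"
    by (rule summable_countable_real[OF summable_component_norms[OF one_in_X]])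
  also have "{A\<in>components \<Omega>. N (chi A (chi \<Omega> (\<lambda>z. 1))) \<noteq> 0} = components \<Omega>"
    using N_chi_one_pos by force
  finally show ?thesis .
qed

lemma component_partial_sum_eq:
  assumes "finite G" "G \<subseteq> components \<Omega>" "A \<in> G" "z \<in> A"
  shows "(\<Sum>B\<in>G. chi B g z) = g z"
proof -
  have "chi B g z = (if B = A then g z else 0)" if "B \<in> G" for B
    using assms that components_nonoverlap[of B \<Omega> A] by (cases "B = A") auto
  then have "(\<Sum>B\<in>G. chi B g z) = (\<Sum>B\<in>G. if B = A then g z else 0)"
    by (rule sum.cong[OF refl])
  then show ?thesis using assms by simp
qed

lemma component_partial_sums_nconv:
  assumes h: "h \<in> X" and G: "\<And>n. finite (G n)" "\<And>n. G n \<subseteq> components \<Omega>" "incseq G"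
    and exhaust: "\<And>A. A \<in> components \<Omega> \<Longrightarrow> eventually (\<lambda>n. A \<in> G n) sequentially"
  shows "nconv N (\<lambda>n z. \<Sum>A\<in>G n. chi A h z) h"
proof -
  define s where "s n = (\<lambda>z. \<Sum>A\<in>G n. chi A h z)" for n
  define w where "w A = N (chi A h)" for A
  have sX: "s n \<in> X" for n unfolding s_def using G(1,2) chi_in_X[OF h] by (intro X_sum) auto
  have "(\<lambda>n. sum w (G n)) \<longlonglongrightarrow> infsum w (components \<Omega>)"
    using summable_component_norms[OF h, unfolded summable_iff_has_sum_infsum] G(1,2) exhaust
    unfolding w_def by (rule has_sum_finite_exhaustion_tendsto)
  then have cauchy: "Cauchy (\<lambda>n. sum w (G n))" by (rule LIMSEQ_imp_Cauchy)
  have bound: "N (\<lambda>z. s m z - s n z) \<le> sum w (G m) - sum w (G n)" if "n \<le> m" for m n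
  proof -
    have sub: "G n \<subseteq> G m" using G(3) that by (rule monoD)
    have "N (\<lambda>z. s m z - s n z) = N (\<lambda>z. \<Sum>A\<in>G m - G n. chi A h z)"
      unfolding s_def by (simp add: sum.subset_diff[OF sub G(1)])
    also have "\<dots> \<le> sum w (G m - G n)"
      unfolding w_def using G(1,2) chi_in_X[OF h] by (intro N_sum) auto
    also have "\<dots> = sum w (G m) - sum w (G n)" by (simp add: sum.subset_diff[OF sub G(1)])
    finally show ?thesis .
  qed
  have "\<exists>M. \<forall>m\<ge>M. \<forall>n\<ge>M. N (\<lambda>z. s m z - s n z) < e" if e: "e > 0" for e
  proof -
    obtain M where M: "\<And>m n. m \<ge> M \<Longrightarrow> n \<ge> M \<Longrightarrow> \<bar>sum w (G m) - sum w (G n)\<bar> < e"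
      using CauchyD[OF cauchy e] by auto
    have "\<forall>m\<ge>M. \<forall>n\<ge>M. N (\<lambda>z. s m z - s n z) < e"
    proof (intro allI impI)
      fix m n assume mn: "M \<le> m" "M \<le> n"
      show "N (\<lambda>z. s m z - s n z) < e"
      proof (cases n m rule: le_cases)
        case le
        then show ?thesis using bound[OF le] M[OF mn] by linarith
      next
        case ge
        have "N (\<lambda>z. s m z - s n z) = N (\<lambda>z. s n z - s m z)" by (rule N_diff_commute[OF sX sX])
        then show ?thesis using bound[OF ge] M[OF mn(2,1)] by linarith
      qed
    qed
    then show ?thesis by blast
  qed
  then have "\<forall>e>0. \<exists>M. \<forall>m\<ge>M. \<forall>n\<ge>M. N (\<lambda>z. s m z - s n z) < e" by blast
  then obtain f where f: "f \<in> X" "nconv N s f" using X_complete[of s, OF sX] by blast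
  have pointwise: "(\<lambda>n. s n z) \<longlonglongrightarrow> h z" if "z \<in> \<Omega>" for z
  proof -
    obtain A where A: "A \<in> components \<Omega>" "z \<in> A" using \<open>z \<in> \<Omega>\<close> Union_components by blast
    have "eventually (\<lambda>n. s n z = h z) sequentially"
      using exhaust[OF A(1)] unfolding s_def
      by (rule eventually_mono) (rule component_partial_sum_eq[OF G(1,2) _ A(2)])
    then show ?thesis by (rule tendsto_eventually)
  qed
  have "f = h" by (rule nconv_limit_eq_pointwise_limit[OF sX f X_vanishes_outside[OF h] pointwise])
  with f(2) show ?thesis unfolding s_def by simp
qed

lemma N_le_infsum_components:
  assumes h: "h \<in> X"
  shows "N h \<le> (\<Sum>\<^sub>\<infinity>A\<in>components \<Omega>. N (chi A h))"
proof -
  obtain G where G: "\<And>n. finite (G n)" "\<And>n. G n \<subseteq> components \<Omega>" "incseq G"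
    and exhaust: "\<And>A. A \<in> components \<Omega> \<Longrightarrow> eventually (\<lambda>n. A \<in> G n) sequentially"
    using countable_finite_exhaustion[OF countable_components] by metis
  define s where "s n = (\<lambda>z. \<Sum>A\<in>G n. chi A h z)" for n
  have sX: "s n \<in> X" for n unfolding s_def using G(1,2) chi_in_X[OF h] by (intro X_sum) auto
  have "N h \<le> (\<Sum>A\<in>G n. N (chi A h)) + N (\<lambda>z. s n z - h z)" for n
  proof -
    have "N h \<le> N (s n) + N (\<lambda>z. h z - s n z)" by (rule N_le_add_diff[OF h sX])
    moreover have "N (s n) \<le> (\<Sum>A\<in>G n. N (chi A h))"
      unfolding s_def using G chi_in_X[OF h] by (intro N_sum) auto
    ultimately show ?thesis using N_diff_commute[OF h sX] by simp
  qed
  moreover have "(\<lambda>n. (\<Sum>A\<in>G n. N (chi A h)) + N (\<lambda>z. s n z - h z))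
      \<longlonglongrightarrow> (\<Sum>\<^sub>\<infinity>A\<in>components \<Omega>. N (chi A h)) + 0"
    using component_partial_sums_nconv[OF h G exhaust] unfolding s_def nconv_def
    by (intro tendsto_add has_sum_finite_exhaustion_tendsto[OF _ G(1,2) exhaust])
      (simp_all add: summable_component_norms[OF h, unfolded summable_iff_has_sum_infsum])
  ultimately show ?thesis by (intro LIMSEQ_le_const) auto
qed

end

definition unimodular_locally_constant :: "complex set \<Rightarrow> fn \<Rightarrow> bool" where
  "unimodular_locally_constant \<Omega> \<phi> \<longleftrightarrow>
     (\<forall>A\<in>components \<Omega>. \<exists>c. \<forall>z\<in>A. \<phi> z = c) \<and> (\<forall>z\<in>\<Omega>. norm (\<phi> z) = 1)"

locale holo_banach_multiplier = holo_banach +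
  fixes \<phi> :: fn
  assumes nontrivial: "\<exists>f\<in>X. f \<noteq> (\<lambda>z. 0)"
    and holomorphic: "\<phi> holomorphic_on \<Omega>"
    and multiplier: "\<forall>f\<in>X. mult_op \<phi> f \<in> X"
begin

lemma funpow_mult_op_in_X: "g \<in> X \<Longrightarrow> (mult_op \<phi> ^^ k) g \<in> X"
  by (induction k) (auto simp: multiplier)

lemma nconv_iterates_imp_power_tendsto_1:
  assumes y: "y \<in> X" and conv: "nconv N (\<lambda>n. (mult_op \<phi> ^^ \<omega> n) y) y"
    and z: "z \<in> \<Omega>" and yz: "y z \<noteq> 0"
  shows "(\<lambda>n. \<phi> z ^ \<omega> n) \<longlonglongrightarrow> 1"
proof -
  have "(\<lambda>n. \<phi> z ^ \<omega> n * y z) \<longlonglongrightarrow> y z"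
    using nconv_imp_pointwise[OF funpow_mult_op_in_X[OF y] y conv z] by (simp add: funpow_mult_op)
  then have "(\<lambda>n. \<phi> z ^ \<omega> n * y z / y z) \<longlonglongrightarrow> y z / y z" by (rule tendsto_divide) (use yz in auto)
  then show ?thesis using yz by simp
qed

lemma recurrent_imp_unimodular:
  assumes "recurrent_op X N (mult_op \<phi>)" and z: "z \<in> \<Omega>"
  shows "norm (\<phi> z) = 1"
proof -
  obtain C where C: "C > 0" "\<forall>f\<in>X. norm (f z) \<le> C * N f" using point_eval z by blast
  have "\<forall>x\<in>X. \<forall>e>0. \<exists>y\<in>Rec_set X N (mult_op \<phi>). N (\<lambda>z. x z - y z) < e"
    using assms(1) unfolding recurrent_op_def ndense_def by blast
  then obtain y where y: "y \<in> Rec_set X N (mult_op \<phi>)" "N (\<lambda>z. chi \<Omega> (\<lambda>z. 1) z - y z) < 1 / C"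
    using one_in_X C(1) by (meson divide_pos_pos zero_less_one)
  then obtain \<omega> where yX: "y \<in> X" and \<omega>: "incseq_pos \<omega>" "nconv N (\<lambda>n. (mult_op \<phi> ^^ \<omega> n) y) y"
    unfolding Rec_set_def by blast
  have "norm (1 - y z) \<le> C * N (\<lambda>z. chi \<Omega> (\<lambda>z. 1) z - y z)"
    using C(2) X_diff[OF one_in_X yX] z by fastforce
  also have "\<dots> < 1" using y(2) C(1) by (simp add: field_simps)
  finally have "y z \<noteq> 0" by auto
  then have "(\<lambda>n. norm (\<phi> z ^ \<omega> n)) \<longlonglongrightarrow> norm (1::complex)"
    using nconv_iterates_imp_power_tendsto_1[OF yX \<omega>(2) z] by (intro tendsto_norm)
  moreover have "\<omega> n \<ge> 1" for n using \<omega>(1) unfolding incseq_pos_def by (simp add: Suc_le_eq)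
  ultimately show ?thesis by (intro power_seq_tendsto_1_imp_eq_1) (auto simp: norm_power)
qed

lemma unimodular_imp_constant_on_components:
  assumes "\<forall>z\<in>\<Omega>. norm (\<phi> z) = 1" and A: "A \<in> components \<Omega>"
  shows "\<exists>c. \<forall>z\<in>A. \<phi> z = c"
proof -
  obtain a where a: "a \<in> A" using in_components_nonempty[OF A] by blast
  have A\<Omega>: "A \<subseteq> \<Omega>" using in_components_subset[OF A] .
  then have "norm (\<phi> z) \<le> norm (\<phi> a)" if "z \<in> A" for z
    using assms(1) a that by (metis order_refl subsetD)
  then have "\<phi> constant_on A"
    using a open_components[OF open_\<Omega> A] in_components_connected[OF A]
      holomorphic_on_subset[OF holomorphic A\<Omega>]
    by (intro maximum_modulus_principle[of \<phi> A A a]) auto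
  then show ?thesis unfolding constant_on_def by blast
qed

lemma recurrent_imp_unimodular_locally_constant:
  assumes "recurrent_op X N (mult_op \<phi>)"
  shows "unimodular_locally_constant \<Omega> \<phi>"
proof -
  have unimodular: "\<forall>z\<in>\<Omega>. norm (\<phi> z) = 1" using recurrent_imp_unimodular[OF assms] by blast
  then show ?thesis
    unfolding unimodular_locally_constant_def
    using unimodular_imp_constant_on_components[OF unimodular] by blast
qed

lemma unimodular_locally_constantE:
  assumes "unimodular_locally_constant \<Omega> \<phi>"
  obtains c where "\<And>A z. A \<in> components \<Omega> \<Longrightarrow> z \<in> A \<Longrightarrow> \<phi> z = c A"
    "\<And>A. A \<in> components \<Omega> \<Longrightarrow> norm (c A) = 1"
proof -
  define c where "c A = \<phi> (SOME z. z \<in> A)" for A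
  have cA: "\<phi> z = c A" if A: "A \<in> components \<Omega>" and z: "z \<in> A" for A z
  proof -
    obtain d where "\<forall>z\<in>A. \<phi> z = d"
      using assms A unfolding unimodular_locally_constant_def by blast
    moreover have "(SOME z. z \<in> A) \<in> A" using z by (rule someI)
    ultimately show ?thesis unfolding c_def using z by simp
  qed
  have c1: "norm (c A) = 1" if A: "A \<in> components \<Omega>" for A
  proof -
    obtain z where z: "z \<in> A" using in_components_nonempty[OF A] by blast
    then have "norm (\<phi> z) = 1"
      using assms in_components_subset[OF A] unfolding unimodular_locally_constant_def
      by (metis subsetD)
    then show ?thesis using cA[OF A z] by simp
  qed
  show ?thesis using cA c1 by (rule that)
qed

lemma iterates_nconv_if_powers_tendsto_1:
  assumes \<phi>: "\<And>A z. A \<in> components \<Omega> \<Longrightarrow> z \<in> A \<Longrightarrow> \<phi> z = c A"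
    and c1: "\<And>A. A \<in> components \<Omega> \<Longrightarrow> norm (c A) = 1"
    and lim: "\<And>A. A \<in> components \<Omega> \<Longrightarrow> (\<lambda>n. c A ^ \<omega> n) \<longlonglongrightarrow> 1"
    and g: "g \<in> X"
  shows "nconv N (\<lambda>n. (mult_op \<phi> ^^ \<omega> n) g) g"
proof -
  define h where "h k = (\<lambda>z. \<phi> z ^ k * g z - g z)" for k
  define a where "a n A = norm (c A ^ \<omega> n - 1) * N (chi A g)" for n A
  have hX: "h k \<in> X" for k
    using X_diff[OF funpow_mult_op_in_X[OF g] g] unfolding h_def funpow_mult_op .
  have chi_h: "chi A (h k) = (\<lambda>z. (c A ^ k - 1) * chi A g z)" if A: "A \<in> components \<Omega>" for A k
    using \<phi>[OF A] unfolding h_def by (auto simp: algebra_simps)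
  have le: "N (h (\<omega> n)) \<le> infsum (a n) (components \<Omega>)" for n
  proof -
    have "N (h (\<omega> n)) \<le> (\<Sum>\<^sub>\<infinity>A\<in>components \<Omega>. N (chi A (h (\<omega> n))))"
      by (rule N_le_infsum_components[OF hX])
    also have "\<dots> = infsum (a n) (components \<Omega>)"
      unfolding a_def
    proof (rule infsum_cong)
      fix A assume A: "A \<in> components \<Omega>"
      show "N (chi A (h (\<omega> n))) = norm (c A ^ \<omega> n - 1) * N (chi A g)"
        unfolding chi_h[OF A] by (rule N_scale[OF chi_in_X[OF g A]])
    qed
    finally show ?thesis .
  qed
  have lim0: "(\<lambda>n. infsum (a n) (components \<Omega>)) \<longlonglongrightarrow> 0"
  proof (rule infsum_tendsto_0_dominated)
    show "(\<lambda>A. 2 * N (chi A g)) summable_on components \<Omega>"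
      using summable_component_norms[OF g] by (rule summable_on_cmult_right)
    fix n A assume A: "A \<in> components \<Omega>"
    have "norm (c A ^ \<omega> n - 1) \<le> 2"
      using norm_triangle_ineq4[of "c A ^ \<omega> n" 1] c1[OF A] by (simp add: norm_power)
    then show "0 \<le> a n A \<and> a n A \<le> 2 * N (chi A g)"
      using N_nonneg[OF chi_in_X[OF g A]] unfolding a_def by (simp add: mult_right_mono)
    have "(\<lambda>n. norm (c A ^ \<omega> n - 1)) \<longlonglongrightarrow> 0"
      using tendsto_norm_zero[OF lim[OF A, THEN LIM_zero]] .
    then show "(\<lambda>n. a n A) \<longlonglongrightarrow> 0"
      unfolding a_def by (rule tendsto_mult_left_zero)
  qed
  have "(\<lambda>n. N (h (\<omega> n))) \<longlonglongrightarrow> 0"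
    by (rule tendsto_sandwich[OF always_eventually always_eventually tendsto_const lim0])
      (simp_all add: N_nonneg[OF hX] le)
  then show ?thesis unfolding nconv_def funpow_mult_op h_def .
qed

lemma unimodular_locally_constant_imp_Lset_eq_X:
  assumes "unimodular_locally_constant \<Omega> \<phi>"
  obtains \<omega> where "incseq_pos \<omega>" "Lset X N (mult_op \<phi>) \<omega> = X"
proof -
  obtain c where \<phi>: "\<And>A z. A \<in> components \<Omega> \<Longrightarrow> z \<in> A \<Longrightarrow> \<phi> z = c A"
    and c1: "\<And>A. A \<in> components \<Omega> \<Longrightarrow> norm (c A) = 1"
    using unimodular_locally_constantE[OF assms] by blast
  obtain \<omega> where \<omega>: "incseq_pos \<omega>" "\<And>A. A \<in> components \<Omega> \<Longrightarrow> (\<lambda>n. c A ^ \<omega> n) \<longlonglongrightarrow> 1"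
    using countable_unimodular_powers_tendsto_1[of _ c, OF countable_components c1] by blast
  have "Lset X N (mult_op \<phi>) \<omega> = X"
    using iterates_nconv_if_powers_tendsto_1[where c=c, OF \<phi> c1 \<omega>(2)] unfolding Lset_def by auto
  with \<omega>(1) show ?thesis by (rule that)
qed

lemma unimodular_locally_constant_imp_rigid:
  assumes "unimodular_locally_constant \<Omega> \<phi>"
  shows "rigid_op X N (mult_op \<phi>)"
proof -
  obtain \<omega> where "incseq_pos \<omega>" "Lset X N (mult_op \<phi>) \<omega> = X"
    using unimodular_locally_constant_imp_Lset_eq_X[OF assms] by blast
  with nontrivial show ?thesis unfolding rigid_op_def Cset_def by (intro bexI[of _ \<omega>]) auto
qed

lemma rigid_imp_recurrent: "rigid_op X N (mult_op \<phi>) \<Longrightarrow> recurrent_op X N (mult_op \<phi>)"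
proof -
  assume "rigid_op X N (mult_op \<phi>)"
  then obtain \<omega> where "incseq_pos \<omega>" "Lset X N (mult_op \<phi>) \<omega> = X"
    unfolding rigid_op_def Cset_def by blast
  then have "Rec_set X N (mult_op \<phi>) = X" unfolding Rec_set_def Lset_def by blast
  then show ?thesis using ndense_X unfolding recurrent_op_def by simp
qed

lemma nonvanishing_on_components_in_Hr_set:
  assumes \<phi>: "unimodular_locally_constant \<Omega> \<phi>" and x: "x \<in> X"
    and nonvanishing: "\<And>A. A \<in> components \<Omega> \<Longrightarrow> \<exists>z\<in>A. x z \<noteq> 0"
  shows "x \<in> Hr_set X N (mult_op \<phi>)"
proof -
  obtain c where c: "\<And>A z. A \<in> components \<Omega> \<Longrightarrow> z \<in> A \<Longrightarrow> \<phi> z = c A"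
    and c1: "\<And>A. A \<in> components \<Omega> \<Longrightarrow> norm (c A) = 1"
    using unimodular_locally_constantE[OF \<phi>] by blast
  have "x \<in> Rec_set X N (mult_op \<phi>)"
    using unimodular_locally_constant_imp_Lset_eq_X[OF \<phi>] x unfolding Rec_set_def Lset_def by blast
  moreover have "Lset X N (mult_op \<phi>) \<omega> = X" if xL: "x \<in> Lset X N (mult_op \<phi>) \<omega>" for \<omega>
  proof -
    have "(\<lambda>n. c A ^ \<omega> n) \<longlonglongrightarrow> 1" if A: "A \<in> components \<Omega>" for A
    proof -
      obtain z where z: "z \<in> A" "x z \<noteq> 0" using nonvanishing[OF A] by blast
      have "nconv N (\<lambda>n. (mult_op \<phi> ^^ \<omega> n) x) x" using xL unfolding Lset_def by blast
      then have "(\<lambda>n. \<phi> z ^ \<omega> n) \<longlonglongrightarrow> 1"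
        using nconv_iterates_imp_power_tendsto_1[OF x _ _ z(2)] in_components_subset[OF A] z(1)
        by blast
      then show ?thesis using c[OF A z(1)] by simp
    qed
    then show ?thesis using iterates_nconv_if_powers_tendsto_1[where c=c, OF c c1] unfolding Lset_def by blast
  qed
  then have "ndense X N (Lset X N (mult_op \<phi>) \<omega>)" if "x \<in> Lset X N (mult_op \<phi>) \<omega>" for \<omega>
    using that ndense_X by metis
  ultimately show ?thesis unfolding Hr_set_def by blast
qed

lemma nonvanishing_on_components_approx:
  assumes y: "y \<in> X" and e: "e > 0"
  obtains x where "x \<in> X" "\<And>A. A \<in> components \<Omega> \<Longrightarrow> \<exists>z\<in>A. x z \<noteq> 0" "N (\<lambda>z. y z - x z) < e"
proof -
  define one where "one = chi \<Omega> (\<lambda>z. 1)"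
  define pt :: "complex set \<Rightarrow> complex" where "pt A = (SOME z. z \<in> A)" for A
  have pt: "pt A \<in> A" "pt A \<in> \<Omega>" if "A \<in> components \<Omega>" for A
    using someI_ex[OF in_components_nonempty[OF that, unfolded ex_in_conv[symmetric]]]
      in_components_subset[OF that] unfolding pt_def by auto
  \<comment> \<open>only for \<open>t \<in> bad\<close> can \<open>y + t \<cdot> one\<close> vanish at one of the points \<open>pt A\<close>\<close>
  define bad where "bad = (\<lambda>A. Re (- y (pt A))) ` components \<Omega>"
  have "countable bad" unfolding bad_def using countable_components by simp
  moreover have "uncountable {0<..<e / (N one + 1)}"
    using e N_nonneg[OF one_in_X] unfolding one_def by (simp add: uncountable_open_interval)
  ultimately have "\<not> {0<..<e / (N one + 1)} \<subseteq> bad" using countable_subset by blast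
  then obtain t where "t \<in> {0<..<e / (N one + 1)}" and t_good: "t \<notin> bad" by blast
  then have t: "0 < t" "t < e / (N one + 1)" by auto
  show ?thesis
  proof
    show "(\<lambda>z. y z + of_real t * one z) \<in> X" using X_add[OF y X_scale[OF one_in_X]] unfolding one_def .
    show "\<exists>z\<in>A. y z + of_real t * one z \<noteq> 0" if A: "A \<in> components \<Omega>" for A
    proof
      show "y (pt A) + of_real t * one (pt A) \<noteq> 0"
      proof
        assume "y (pt A) + of_real t * one (pt A) = 0"
        then have "of_real t = - y (pt A)" using pt[OF A] unfolding one_def
          by (simp add: eq_neg_iff_add_eq_0 add.commute)
        then have "t = Re (- y (pt A))" by (metis Re_complex_of_real)
        with t_good A show False unfolding bad_def by blast
      qed
    qed (use pt[OF A] in auto)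
    have "N (\<lambda>z. y z - (y z + of_real t * one z)) = N (\<lambda>z. of_real (- t) * one z)" by simp
    also have "\<dots> = t * N one" using N_scale[OF one_in_X, of "of_real (- t)"] t(1) unfolding one_def by simp
    also have "\<dots> \<le> t * (N one + 1)" using t(1) by simp
    also have "\<dots> < e" using t(2) N_nonneg[OF one_in_X] unfolding one_def
      by (simp add: pos_less_divide_eq)
    finally show "N (\<lambda>z. y z - (y z + of_real t * one z)) < e" .
  qed
qed

lemma unimodular_locally_constant_imp_Hr_set_dense:
  assumes "unimodular_locally_constant \<Omega> \<phi>"
  shows "ndense X N (Hr_set X N (mult_op \<phi>))"
  unfolding ndense_def
proof safe
  show "x \<in> X" if "x \<in> Hr_set X N (mult_op \<phi>)" for x using that unfolding Hr_set_def Rec_set_def by auto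
  fix y and e :: real assume y: "y \<in> X" and e: "0 < e"
  obtain x where x: "x \<in> X" "\<And>A. A \<in> components \<Omega> \<Longrightarrow> \<exists>z\<in>A. x z \<noteq> 0"
    and close: "N (\<lambda>z. y z - x z) < e"
    using nonvanishing_on_components_approx[OF y e] by blast
  show "\<exists>x\<in>Hr_set X N (mult_op \<phi>). N (\<lambda>z. y z - x z) < e"
    using nonvanishing_on_components_in_Hr_set[OF assms x] close by blast
qed

lemma Hr_set_dense_imp_hyper_recurrent:
  assumes "ndense X N (Hr_set X N (mult_op \<phi>))"
  shows "hyper_recurrent_op X N (mult_op \<phi>)"
proof -
  have dense: "\<forall>x\<in>X. \<forall>e>0. \<exists>y\<in>Hr_set X N (mult_op \<phi>). N (\<lambda>z. x z - y z) < e"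
    using assms unfolding ndense_def by blast
  have Hr_Rec: "Hr_set X N (mult_op \<phi>) \<subseteq> Rec_set X N (mult_op \<phi>)" unfolding Hr_set_def by auto
  have "recurrent_op X N (mult_op \<phi>)"
    unfolding recurrent_op_def ndense_def
  proof (intro conjI ballI allI impI)
    show "Rec_set X N (mult_op \<phi>) \<subseteq> X" unfolding Rec_set_def by auto
    fix x and e :: real assume "x \<in> X" "0 < e"
    then obtain y where "y \<in> Hr_set X N (mult_op \<phi>)" "N (\<lambda>z. x z - y z) < e" using dense by blast
    then show "\<exists>y\<in>Rec_set X N (mult_op \<phi>). N (\<lambda>z. x z - y z) < e" using Hr_Rec by blast
  qed
  moreover have "Hr_set X N (mult_op \<phi>) \<noteq> {}"
    using dense[rule_format, OF one_in_X, of 1] by auto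
  ultimately show ?thesis unfolding hyper_recurrent_op_def by blast
qed

end

theorem theorem5p8:
  fixes \<Omega> :: "complex set" and X :: "(complex \<Rightarrow> complex) set"
    and N :: "(complex \<Rightarrow> complex) \<Rightarrow> real" and \<phi> :: "complex \<Rightarrow> complex"
  assumes "open \<Omega>" and "\<Omega> \<noteq> {}"
    and "holo_banach_space \<Omega> X N"
    and "\<exists>f\<in>X. f \<noteq> (\<lambda>z. 0)"
    and "(\<lambda>z. if z \<in> \<Omega> then 1 else 0) \<in> X"
    and "\<forall>z\<in>\<Omega>. \<exists>C>0. \<forall>f\<in>X. norm (f z) \<le> C * N f"
    and "\<forall>g\<in>X. (\<forall>A\<in>components \<Omega>. (\<lambda>z. if z \<in> A then g z else 0) \<in> X) \<and>
                (\<lambda>A. N (\<lambda>z. if z \<in> A then g z else 0)) summable_on components \<Omega>"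
    and "\<phi> holomorphic_on \<Omega>"
    and "\<forall>f\<in>X. mult_op \<phi> f \<in> X"
    and "\<exists>C. \<forall>f\<in>X. N (mult_op \<phi> f) \<le> C * N f"
  shows "(recurrent_op X N (mult_op \<phi>) \<longleftrightarrow> rigid_op X N (mult_op \<phi>)) \<and>
         (rigid_op X N (mult_op \<phi>) \<longleftrightarrow>
            ((\<forall>A\<in>components \<Omega>. \<exists>c. \<forall>z\<in>A. \<phi> z = c) \<and> (\<forall>z\<in>\<Omega>. norm (\<phi> z) = 1))) \<and>
         (((\<forall>A\<in>components \<Omega>. \<exists>c. \<forall>z\<in>A. \<phi> z = c) \<and> (\<forall>z\<in>\<Omega>. norm (\<phi> z) = 1)) \<longleftrightarrow>
            hyper_recurrent_op X N (mult_op \<phi>)) \<and>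
         (hyper_recurrent_op X N (mult_op \<phi>) \<longleftrightarrow> ndense X N (Hr_set X N (mult_op \<phi>)))"
proof -
  interpret holo_banach_multiplier \<Omega> X N \<phi>
    by unfold_locales (use assms in auto)
  have "hyper_recurrent_op X N (mult_op \<phi>) \<Longrightarrow> recurrent_op X N (mult_op \<phi>)"
    unfolding hyper_recurrent_op_def by simp
  then show ?thesis
    using recurrent_imp_unimodular_locally_constant unimodular_locally_constant_imp_rigid
      rigid_imp_recurrent unimodular_locally_constant_imp_Hr_set_dense
      Hr_set_dense_imp_hyper_recurrent
    unfolding unimodular_locally_constant_def by blast
qed

end
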